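(* Let $m\ge 3$. For every $\epsilon>0$ there exists $\delta>0$ such that if $f(z)=z^{m}+\sum_{k=0}^{m-1}a_kz^k$ satisfies the $\delta$-condition and $\Omega(f)$ is simply connected, then $\Omega(f)\supseteq\{z\in\mathbb{C}: |z|\ge 2^{\frac{1}{m-1}}+\epsilon\}$.
   Context: A monic polynomial $f(z)=z^{m}+\sum_{k=0}^{m-1}a_{k}z^{k}$ satisfies the $\delta$-condition if $|a_{k}|<\delta$ for all $1\le k\le m-1$ (no condition on $a_0$). $\Omega(f)=\{z\in\hat{\mathbb{C}}: f^{n}(z)\to\infty \text{ as } n\to+\infty\}$, where $f^n$ is the $n$-th iterate. *)

theory Defs
  imports "HOL-Analysis.Analysis"
begin

definition monic_poly :: "nat \<Rightarrow> (nat \<Rightarrow> complex) \<Rightarrow> complex \<Rightarrow> complex" where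
  "monic_poly m a z = z ^ m + (\<Sum>k<m. a k * z ^ k)"

definition delta_condition :: "nat \<Rightarrow> real \<Rightarrow> (nat \<Rightarrow> complex) \<Rightarrow> bool" where
  "delta_condition m \<delta> a \<longleftrightarrow> (\<forall>k\<in>{1..m-1}. norm (a k) < \<delta>)"

text \<open>Finite part of Omega(f): points whose orbit tends to infinity.\<close>
definition escaping_set :: "(complex \<Rightarrow> complex) \<Rightarrow> complex set" where
  "escaping_set f = {z. filterlim (\<lambda>n. (f ^^ n) z) at_infinity sequentially}"

text \<open>Riemann sphere modelled as the unit sphere in R^3; inverse stereographic
  projection, with infinity corresponding to the north pole (0,0,1).\<close>
definition sphere_embed :: "complex \<Rightarrow> real \<times> real \<times> real" where
  "sphere_embed z = (2 * Re z / (1 + (cmod z)\<^sup>2), 2 * Im z / (1 + (cmod z)\<^sup>2),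
                     ((cmod z)\<^sup>2 - 1) / ((cmod z)\<^sup>2 + 1))"

definition north_pole :: "real \<times> real \<times> real" where
  "north_pole = (0, 0, 1)"

definition Omega_hat :: "(complex \<Rightarrow> complex) \<Rightarrow> (real \<times> real \<times> real) set" where
  "Omega_hat f = insert north_pole (sphere_embed ` escaping_set f)"

end

(*
  Put r = |a 0| and T = 2 powr (1 / (m - 1)) + eps.  Points with |z| >= max T r escape, so a
  non-escaping z0 with |z0| >= T forces r > T, and then every non-escaping point satisfies
  |z^m + a 0| < (1 - kappa/2) r: the filled Julia set lies in the preimage under z^m of a disc
  about -a 0 that avoids 0, i.e. in m disjoint sectors.  The m preimages of z0 do not escape
  and sum to -a (m - 1), which is small, so they cannot all lie in one sector (each sector lies
  in a half-plane bounded away from 0).  Lifting a slightly larger circle about -a 0 through the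
  branch of the m-th root containing a preimage za gives a loop in Omega(f) that winds once
  around za and not around a preimage zb in another sector.  The Moebius map
  (z - zb) / (z - za) extends continuously to infinity, so it carries this loop to a loop in
  C - {0} of winding number -1 that is contractible if Omega(f) is simply connected.
*)
theory Submission
  imports Defs "HOL-Complex_Analysis.Complex_Analysis"
    "HOL-Computational_Algebra.Fundamental_Theorem_Algebra"
begin

section \<open>Principal roots\<close>

definition principal_root :: "nat \<Rightarrow> complex \<Rightarrow> complex" where
  "principal_root m v = exp (Ln v / of_nat m)"

lemma principal_root_nonzero: "principal_root m v \<noteq> 0"
  by (simp add: principal_root_def)

lemma principal_root_power:
  assumes "1 \<le> m" "v \<noteq> 0"
  shows "principal_root m v ^ m = v"
proof -
  have "principal_root m v ^ m = exp (of_nat m * (Ln v / of_nat m))"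
    unfolding principal_root_def by (metis exp_of_nat_mult)
  also have "\<dots> = v"
    using assms by simp
  finally show ?thesis .
qed

lemma has_field_derivative_principal_root:
  assumes "v \<notin> \<real>\<^sub>\<le>\<^sub>0"
  shows "(principal_root m has_field_derivative principal_root m v / (of_nat m * v)) (at v)"
proof -
  have "v \<noteq> 0"
    using assms by auto
  have "((\<lambda>v. exp (Ln v / of_nat m)) has_field_derivative
          exp (Ln v / of_nat m) * (inverse v / of_nat m)) (at v)"
    by (rule DERIV_chain2[OF DERIV_exp DERIV_cdivide[OF has_field_derivative_Ln[OF assms]]])
  then show ?thesis
    using \<open>v \<noteq> 0\<close> unfolding principal_root_def[abs_def] by (simp add: field_simps)
qed

lemma holomorphic_on_principal_root: "principal_root m holomorphic_on -\<real>\<^sub>\<le>\<^sub>0"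
  unfolding principal_root_def[abs_def]
  by (intro holomorphic_intros holomorphic_on_Ln) auto

lemma right_halfplane_nonpos_Reals: "{v. 0 < Re v} \<subseteq> -\<real>\<^sub>\<le>\<^sub>0"
  by (auto simp: nonpos_Reals_def)

lemma Re_principal_root_ge:
  assumes "v \<noteq> 0" "1 \<le> m"
  shows "cmod v powr (1 / real m) * (Re v / cmod v) \<le> Re (principal_root m v)"
proof -
  have "Re (principal_root m v) = cmod v powr (1 / real m) * cos (Arg v / real m)"
    unfolding principal_root_def Re_exp
    using assms by (simp add: Arg_eq_Im_Ln Re_divide Im_divide power2_eq_square powr_def)
  moreover have "Re v / cmod v \<le> cos (Arg v / real m)"
  proof -
    have "cos \<bar>Arg v\<bar> \<le> cos (\<bar>Arg v\<bar> / real m)"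
      by (rule cos_monotone_0_pi_le)
        (use Arg_bounded[of v] assms in \<open>auto simp: divide_le_eq mult_le_cancel_left1\<close>)
    then show ?thesis
      using cos_Arg[OF assms(1)] by (metis abs_divide abs_of_nat cos_abs_real)
  qed
  ultimately show ?thesis
    by (metis mult_left_mono powr_ge_zero)
qed

text \<open>The disc keeps \<open>Arg v\<close> away from \<open>\<plusminus>\<pi>/2\<close> and \<open>|v|\<close> away from \<open>0\<close>.\<close>
lemma Re_principal_root_disc:
  assumes "1 \<le> m" "1 \<le> r" "0 < \<kappa>" "\<kappa> \<le> 2" "cmod (v - of_real r) < (1 - \<kappa>/2) * r"
  shows "\<kappa>\<^sup>2 / 8 \<le> Re (principal_root m v)"
proof -
  have "0 \<le> \<kappa>/2 * r"
    using assms(2,3) by simp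
  have "r - Re v \<le> cmod (v - of_real r)"
    using abs_Re_le_cmod[of "v - of_real r"] by simp
  then have Re_v: "\<kappa>/2 * r < Re v"
    using assms(5) by (simp add: algebra_simps)
  have "cmod v \<le> cmod (v - of_real r) + r"
    using norm_triangle_ineq[of "v - of_real r" "of_real r"] assms(2) by simp
  then have "cmod v < 2 * r"
    using assms(5) \<open>0 \<le> \<kappa>/2 * r\<close> by (simp add: algebra_simps)
  have "v \<noteq> 0"
    using Re_v \<open>0 \<le> \<kappa>/2 * r\<close> by auto
  have "\<kappa>/4 * cmod v \<le> \<kappa>/4 * (2 * r)"
    using \<open>cmod v < 2 * r\<close> assms(3) by (intro mult_left_mono) auto
  then have ratio: "\<kappa>/4 \<le> Re v / cmod v"
    using Re_v \<open>v \<noteq> 0\<close> by (simp add: pos_le_divide_eq)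
  have "\<kappa>/2 \<le> \<kappa>/2 * r"
    using assms(2,3) by simp
  then have "\<kappa>/2 \<le> cmod v"
    using Re_v complex_Re_le_cmod[of v] by linarith
  have root: "\<kappa>/2 \<le> cmod v powr (1 / real m)"
  proof (cases "1 \<le> cmod v")
    case True
    then show ?thesis
      using ge_one_powr_ge_zero[of "cmod v" "1 / real m"] assms(4) by simp
  next
    case False
    then have "cmod v powr 1 \<le> cmod v powr (1 / real m)"
      using assms(1) \<open>v \<noteq> 0\<close> by (intro powr_mono') auto
    then show ?thesis
      using \<open>\<kappa>/2 \<le> cmod v\<close> by simp
  qed
  have "\<kappa>\<^sup>2 / 8 = \<kappa>/2 * (\<kappa>/4)"
    by (simp add: power2_eq_square)
  also have "\<dots> \<le> cmod v powr (1 / real m) * (Re v / cmod v)"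
    using root ratio assms(3) by (intro mult_mono) auto
  also have "\<dots> \<le> Re (principal_root m v)"
    by (rule Re_principal_root_ge[OF \<open>v \<noteq> 0\<close> assms(1)])
  finally show ?thesis .
qed

lemma principal_root_branch_through:
  assumes "1 \<le> m" "z \<noteq> 0" "e \<noteq> 0"
  obtains \<beta> where "\<beta> ^ m = e" "z = \<beta> * principal_root m ((z / \<beta>) ^ m)"
proof
  define u where "u = principal_root m (z ^ m / e)"
  have "u \<noteq> 0" "u ^ m = z ^ m / e"
    unfolding u_def using assms by (simp_all add: principal_root_nonzero principal_root_power)
  then show "(z / u) ^ m = e"
    using assms(2,3) by (simp add: power_divide)
  show "z = z / u * principal_root m ((z / (z / u)) ^ m)"
    using \<open>u \<noteq> 0\<close> \<open>u ^ m = z ^ m / e\<close> assms(2) by (simp add: u_def)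
qed

section \<open>Winding numbers\<close>

lemma winding_number_comp_holomorphic:
  assumes "f holomorphic_on S" "open S" "valid_path \<gamma>" "path_image \<gamma> \<subseteq> S"
    and "\<And>w. w \<in> path_image \<gamma> \<Longrightarrow> f w \<noteq> 0"
  shows "winding_number (f \<circ> \<gamma>) 0 = contour_integral \<gamma> (\<lambda>w. deriv f w / f w) / (2 * pi * \<i>)"
proof -
  have "valid_path (f \<circ> \<gamma>)"
    using valid_path_compose_holomorphic[OF assms(3,1,2,4)] .
  moreover have "0 \<notin> path_image (f \<circ> \<gamma>)"
    using assms(5) by (auto simp: path_image_compose)
  ultimately have "winding_number (f \<circ> \<gamma>) 0 = 1/(2*pi*\<i>) * contour_integral (f \<circ> \<gamma>) (\<lambda>w. 1/(w - 0))"
    by (rule winding_number_valid_path)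
  also have "contour_integral (f \<circ> \<gamma>) (\<lambda>w. 1/(w - 0)) = contour_integral \<gamma> (\<lambda>w. deriv f w * (1/(f w - 0)))"
    using assms(1-4) by (intro contour_integral_comp_analyticW) (auto simp: analytic_on_open)
  finally show ?thesis
    by (simp add: o_def)
qed

lemma winding_number_ratio:
  assumes "valid_path \<gamma>" "za \<notin> path_image \<gamma>" "zb \<notin> path_image \<gamma>"
  shows "winding_number (\<lambda>t. (\<gamma> t - zb) / (\<gamma> t - za)) 0 = winding_number \<gamma> zb - winding_number \<gamma> za"
proof -
  define \<Phi> where "\<Phi> w = (w - zb) / (w - za)" for w
  have field_identity: "(d1 - d2) / d1\<^sup>2 / (d2 / d1) = 1/d2 - 1/d1"
    if "d1 \<noteq> 0" "d2 \<noteq> 0" for d1 d2 :: complex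
    using that by (simp add: field_simps power2_eq_square)
  have log_deriv: "deriv \<Phi> w / \<Phi> w = 1/(w - zb) - 1/(w - za)" if "w \<noteq> za" "w \<noteq> zb" for w
  proof -
    have "w - za \<noteq> 0" "w - zb \<noteq> 0"
      using that by auto
    have "(\<Phi> has_field_derivative (zb - za) / (w - za)\<^sup>2) (at w)"
      unfolding \<Phi>_def using that
      by (auto intro!: derivative_eq_intros simp: field_simps power2_eq_square)
    then have "deriv \<Phi> w / \<Phi> w = (zb - za) / (w - za)\<^sup>2 / ((w - zb) / (w - za))"
      by (simp add: DERIV_imp_deriv \<Phi>_def)
    also have "\<dots> = ((w - za) - (w - zb)) / (w - za)\<^sup>2 / ((w - zb) / (w - za))"
      by simp
    also have "\<dots> = 1/(w - zb) - 1/(w - za)"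
      using \<open>w - za \<noteq> 0\<close> \<open>w - zb \<noteq> 0\<close> field_identity by blast
    finally show ?thesis .
  qed
  have "winding_number (\<Phi> \<circ> \<gamma>) 0 = contour_integral \<gamma> (\<lambda>w. deriv \<Phi> w / \<Phi> w) / (2*pi*\<i>)"
    by (rule winding_number_comp_holomorphic[where S="-{za}"])
      (use assms in \<open>auto simp: \<Phi>_def[abs_def] intro!: holomorphic_intros\<close>)
  also have "contour_integral \<gamma> (\<lambda>w. deriv \<Phi> w / \<Phi> w) =
             contour_integral \<gamma> (\<lambda>w. 1/(w - zb) - 1/(w - za))"
    by (intro contour_integral_eq log_deriv) (use assms in auto)
  also have "\<dots> = 2*pi*\<i> * winding_number \<gamma> zb - 2*pi*\<i> * winding_number \<gamma> za"
    using assms by (intro contour_integral_unique has_contour_integral_diff has_contour_integral_winding_number)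
  finally show ?thesis
    by (simp add: \<Phi>_def o_def diff_divide_distrib)
qed

lemma winding_number_zero_simply_connected:
  fixes S :: "'a::real_normed_vector set"
  assumes "simply_connected S" "path \<gamma>" "pathfinish \<gamma> = pathstart \<gamma>" "path_image \<gamma> \<subseteq> S"
    and "continuous_on S g" "\<And>x. x \<in> S \<Longrightarrow> g x \<noteq> 0"
  shows "winding_number (g \<circ> \<gamma>) 0 = 0"
proof -
  define p where "p = pathstart \<gamma>"
  have "p \<in> S"
    using assms(4) pathstart_in_path_image unfolding p_def by blast
  then have "homotopic_loops S \<gamma> (linepath p p)"
    using assms(1-4) by (simp add: simply_connected_eq_contractible_loop_any)
  then have "homotopic_loops (-{0}) (g \<circ> \<gamma>) (g \<circ> linepath p p)"
    by (rule homotopic_loops_continuous_image) (use assms(5,6) in auto)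
  then have "winding_number (g \<circ> \<gamma>) 0 = winding_number (linepath (g p) (g p)) 0"
    by (simp add: winding_number_homotopic_loops linepath_refl o_def)
  then show ?thesis
    using assms(6)[OF \<open>p \<in> S\<close>] by simp
qed

lemma principal_root_diff_factor:
  assumes "1 \<le> m" "w \<noteq> 0" "v \<noteq> 0"
  shows "w - v = (principal_root m w - principal_root m v) *
           (\<Sum>i<m. principal_root m v ^ (m - Suc i) * principal_root m w ^ i)"
  using power_diff_sumr2[of "principal_root m w" m "principal_root m v"]
    principal_root_power[OF assms(1)] assms(2,3) by simp

text \<open>\<open>root_branch_factor m v w\<close> is \<open>(w - v) \<psi>'(w) / (\<psi>(w) - \<psi>(v))\<close> for \<open>\<psi> = principal_root m\<close>,
  written via \<open>principal_root_diff_factor\<close> so that it is visibly holomorphic at \<open>w = v\<close>.\<close>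
definition root_branch_factor :: "nat \<Rightarrow> complex \<Rightarrow> complex \<Rightarrow> complex" where
  "root_branch_factor m v w = principal_root m w *
     (\<Sum>i<m. principal_root m v ^ (m - Suc i) * principal_root m w ^ i) / (of_nat m * w)"

lemma holomorphic_on_root_branch_factor:
  "root_branch_factor m v holomorphic_on {w. 0 < Re w}"
  unfolding root_branch_factor_def[abs_def]
  using holomorphic_on_subset[OF holomorphic_on_principal_root right_halfplane_nonpos_Reals]
  by (intro holomorphic_intros) auto

lemma root_branch_factor_self:
  assumes "1 \<le> m" "v \<noteq> 0"
  shows "root_branch_factor m v v = 1"
proof -
  define u where "u = principal_root m v"
  have "u ^ (m - Suc i) * u ^ i = u ^ (m - 1)" if "i < m" for i
    using that by (simp flip: power_add)
  then have "root_branch_factor m v v = of_nat m * (u * u ^ (m - 1)) / (of_nat m * v)"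
    by (simp add: root_branch_factor_def u_def mult_ac)
  also have "u * u ^ (m - 1) = v"
    using principal_root_power[OF assms] assms(1) by (cases m) (simp_all add: u_def)
  finally show ?thesis
    using assms by simp
qed

lemma root_branch_log_deriv:
  fixes m :: nat and \<beta> v w :: complex
  defines "g \<equiv> \<lambda>w. \<beta> * principal_root m w - \<beta> * principal_root m v"
  assumes "1 \<le> m" "\<beta> \<noteq> 0" "0 < Re w" "0 < Re v" "w \<noteq> v"
  shows "deriv g w / g w = root_branch_factor m v w / (w - v)"
proof -
  define u where "u = principal_root m"
  define Q where "Q = (\<Sum>i<m. u v ^ (m - Suc i) * u w ^ i)"
  have "w \<noteq> 0" "v \<noteq> 0"
    using assms(4,5) by auto
  then have factor: "w - v = (u w - u v) * Q"
    unfolding u_def Q_def by (rule principal_root_diff_factor[OF assms(2)])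
  then have "Q \<noteq> 0" "u w \<noteq> u v"
    using assms(6) by auto
  have "w \<notin> \<real>\<^sub>\<le>\<^sub>0"
    using assms(4) right_halfplane_nonpos_Reals by auto
  then have "(g has_field_derivative \<beta> * (u w / (of_nat m * w))) (at w)"
    unfolding g_def u_def by (auto intro!: derivative_eq_intros has_field_derivative_principal_root)
  then have "deriv g w / g w = \<beta> * (u w / (of_nat m * w)) / (\<beta> * (u w - u v))"
    by (simp add: DERIV_imp_deriv g_def u_def right_diff_distrib)
  also have "\<dots> = u w * Q / (of_nat m * w) / ((u w - u v) * Q)"
    using \<open>Q \<noteq> 0\<close> assms(3) by simp
  also have "\<dots> = root_branch_factor m v w / (w - v)"
    by (simp add: root_branch_factor_def u_def Q_def factor[unfolded u_def Q_def])
  finally show ?thesis .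
qed

text \<open>This holds because the branch is injective on the right half-plane.\<close>
lemma winding_number_principal_root_branch:
  assumes "1 \<le> m" "\<beta> \<noteq> 0" "valid_path \<gamma>" "pathfinish \<gamma> = pathstart \<gamma>"
    and "path_image \<gamma> \<subseteq> {v. 0 < Re v} - {va}" "0 < Re va"
  shows "winding_number ((\<lambda>v. \<beta> * principal_root m v) \<circ> \<gamma>) (\<beta> * principal_root m va)
         = winding_number \<gamma> va"
proof -
  define H where "H = {v::complex. 0 < Re v}"
  define g where "g v = \<beta> * principal_root m v - \<beta> * principal_root m va" for v
  have "va \<noteq> 0"
    using assms(6) by auto
  have "g w \<noteq> 0" if "w \<in> path_image \<gamma>" for w
  proof -
    have "0 < Re w" "w \<noteq> va"
      using that assms(5) by auto
    moreover have "w \<noteq> 0"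
      using \<open>0 < Re w\<close> by auto
    ultimately have "principal_root m w \<noteq> principal_root m va"
      using principal_root_diff_factor[OF assms(1) _ \<open>va \<noteq> 0\<close>, of w] by auto
    then show ?thesis
      using assms(2) by (simp add: g_def)
  qed
  then have "winding_number (g \<circ> \<gamma>) 0 = contour_integral \<gamma> (\<lambda>w. deriv g w / g w) / (2*pi*\<i>)"
    using assms(3,5) holomorphic_on_subset[OF holomorphic_on_principal_root right_halfplane_nonpos_Reals]
    by (intro winding_number_comp_holomorphic[where S=H])
      (auto simp: g_def[abs_def] H_def open_halfspace_Re_gt intro!: holomorphic_intros)
  also have "contour_integral \<gamma> (\<lambda>w. deriv g w / g w) =
             contour_integral \<gamma> (\<lambda>w. root_branch_factor m va w / (w - va))"
  proof (rule contour_integral_eq)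
    show "deriv g w / g w = root_branch_factor m va w / (w - va)" if "w \<in> path_image \<gamma>" for w
      unfolding g_def[abs_def] by (rule root_branch_log_deriv) (use that assms in auto)
  qed
  also have "\<dots> = 2*pi*\<i> * winding_number \<gamma> va * root_branch_factor m va va"
    using assms(3-6) holomorphic_on_root_branch_factor
    by (intro contour_integral_unique Cauchy_integral_formula_convex_simple[where S=H])
      (auto simp: H_def convex_halfspace_Re_gt interior_open open_halfspace_Re_gt)
  finally show ?thesis
    using root_branch_factor_self[OF assms(1) \<open>va \<noteq> 0\<close>]
    by (simp add: winding_number_offset[of _ "\<beta> * principal_root m va"] g_def o_def)
qed

lemma winding_number_principal_root_branch_outside:
  assumes "path \<gamma>" "pathfinish \<gamma> = pathstart \<gamma>" "path_image \<gamma> \<subseteq> {v. 0 < Re v}"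
    and "zb \<notin> (\<lambda>v. \<beta> * principal_root m v) ` {v. 0 < Re v}"
  shows "winding_number ((\<lambda>v. \<beta> * principal_root m v) \<circ> \<gamma>) zb = 0"
proof -
  have "continuous_on {v. 0 < Re v} (\<lambda>v. \<beta> * principal_root m v - zb)"
    using holomorphic_on_subset[OF holomorphic_on_principal_root right_halfplane_nonpos_Reals]
    by (intro continuous_intros holomorphic_on_imp_continuous_on)
  then have "winding_number ((\<lambda>v. \<beta> * principal_root m v - zb) \<circ> \<gamma>) 0 = 0"
    using assms convex_imp_simply_connected[OF convex_halfspace_Re_gt]
    by (intro winding_number_zero_simply_connected) auto
  then show ?thesis
    by (simp add: winding_number_offset[of _ zb] o_def)
qed

section \<open>The Riemann sphere\<close>

text \<open>\<open>[sphere_num za p : sphere_den za p]\<close> are homogeneous coordinates of the point \<open>p\<close>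
  of the sphere, rescaled by \<open>cnj (z - za)\<close> so that both are polynomial in the coordinates
  of \<open>p\<close> and \<open>sphere_den\<close> vanishes only at \<open>za\<close> and at the north pole.  In these coordinates
  the Moebius map \<open>(z - zb) / (z - za)\<close> extends continuously to \<open>\<infinity>\<close>, with value \<open>1\<close>.\<close>
definition sphere_num :: "complex \<Rightarrow> real \<times> real \<times> real \<Rightarrow> complex" where
  "sphere_num za p = of_real (1 + snd (snd p)) - cnj za * Complex (fst p) (fst (snd p))"

definition sphere_den :: "complex \<Rightarrow> real \<times> real \<times> real \<Rightarrow> complex" where
  "sphere_den za p = Complex (fst p) (- fst (snd p)) - cnj za * of_real (1 - snd (snd p))"

lemma sphere_embed_coordinates:
  fixes z :: complex
  defines "D \<equiv> 1 + (cmod z)\<^sup>2"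
  shows "Complex (fst (sphere_embed z)) (fst (snd (sphere_embed z))) = of_real (2 / D) * z"
    and "Complex (fst (sphere_embed z)) (- fst (snd (sphere_embed z))) = of_real (2 / D) * cnj z"
    and "1 + snd (snd (sphere_embed z)) = (2 / D) * (cmod z)\<^sup>2"
    and "1 - snd (snd (sphere_embed z)) = 2 / D"
proof -
  have "D > 0"
    unfolding D_def by (simp add: add_pos_nonneg)
  then show "Complex (fst (sphere_embed z)) (fst (snd (sphere_embed z))) = of_real (2 / D) * z"
    and "Complex (fst (sphere_embed z)) (- fst (snd (sphere_embed z))) = of_real (2 / D) * cnj z"
    and "1 + snd (snd (sphere_embed z)) = (2 / D) * (cmod z)\<^sup>2"
    and "1 - snd (snd (sphere_embed z)) = 2 / D"
    unfolding sphere_embed_def D_def by (simp_all add: complex_eq_iff field_simps)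
qed

lemma sphere_den_embed:
  "sphere_den za (sphere_embed z) = of_real (2 / (1 + (cmod z)\<^sup>2)) * cnj (z - za)"
proof -
  have "of_real c * cnj z - cnj za * of_real c = of_real c * cnj (z - za)" for c :: real
    by (simp add: algebra_simps)
  then show ?thesis
    unfolding sphere_den_def sphere_embed_coordinates(2,4) .
qed

lemma sphere_num_embed:
  "sphere_num za (sphere_embed z) = z * sphere_den za (sphere_embed z)"
proof -
  define c where "c = 2 / (1 + (cmod z)\<^sup>2)"
  have "(complex_of_real (cmod z))\<^sup>2 = z * cnj z"
    by (metis complex_norm_square of_real_power)
  then have "of_real (c * (cmod z)\<^sup>2) - cnj za * (of_real c * z) = z * (of_real c * cnj (z - za))"
    by (simp add: algebra_simps)
  then show ?thesis
    unfolding sphere_num_def sphere_den_embed sphere_embed_coordinates(1,3) c_def .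
qed

lemma sphere_den_embed_nonzero:
  assumes "z \<noteq> za"
  shows "sphere_den za (sphere_embed z) \<noteq> 0"
proof -
  have "0 < 2 / (1 + (cmod z)\<^sup>2)"
    by (simp add: add_pos_nonneg)
  then show ?thesis
    using assms unfolding sphere_den_embed
    by (metis less_irrefl mult_eq_0_iff complex_cnj_zero_iff of_real_eq_0_iff right_minus_eq)
qed

lemma sphere_num_den_north_pole: "sphere_num za north_pole = 2" "sphere_den za north_pole = 0"
  by (simp_all add: sphere_num_def sphere_den_def north_pole_def complex_eq_iff)

lemma continuous_on_sphere_embed: "continuous_on S sphere_embed"
proof -
  have "1 + (cmod z)\<^sup>2 \<noteq> 0" "(cmod z)\<^sup>2 + 1 \<noteq> 0" for z :: complex
    by (metis add_pos_nonneg zero_less_one zero_le_power2 less_irrefl add.commute)+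
  then show ?thesis
    unfolding sphere_embed_def[abs_def] by (intro continuous_intros) auto
qed

definition sphere_moebius :: "complex \<Rightarrow> complex \<Rightarrow> real \<times> real \<times> real \<Rightarrow> complex" where
  "sphere_moebius za zb p =
     (sphere_num za p - zb * sphere_den za p) / (sphere_num za p - za * sphere_den za p)"

lemma sphere_moebius_denominator_embed:
  "sphere_num za (sphere_embed z) - w * sphere_den za (sphere_embed z) =
     (z - w) * sphere_den za (sphere_embed z)"
  by (simp add: sphere_num_embed algebra_simps)

lemma sphere_moebius_embed:
  assumes "z \<noteq> za"
  shows "sphere_moebius za zb (sphere_embed z) = (z - zb) / (z - za)"
  using assms sphere_den_embed_nonzero[OF assms]
  by (simp add: sphere_moebius_def sphere_moebius_denominator_embed)

lemma sphere_moebius_north_pole: "sphere_moebius za zb north_pole = 1"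
  by (simp add: sphere_moebius_def sphere_num_den_north_pole)

lemma continuous_on_sphere_moebius:
  assumes "za \<notin> S"
  shows "continuous_on (insert north_pole (sphere_embed ` S)) (sphere_moebius za zb)"
proof -
  have "sphere_num za p - za * sphere_den za p \<noteq> 0"
    if p_in: "p \<in> insert north_pole (sphere_embed ` S)" for p
  proof (cases "p = north_pole")
    case False
    then obtain z where "p = sphere_embed z" "z \<in> S"
      using p_in by auto
    moreover from this have "z \<noteq> za"
      using assms by auto
    ultimately show ?thesis
      using sphere_den_embed_nonzero by (simp add: sphere_moebius_denominator_embed)
  qed (simp add: sphere_num_den_north_pole)
  then show ?thesis
    unfolding sphere_moebius_def[abs_def] sphere_num_def sphere_den_def
    by (intro continuous_intros) auto
qed

text \<open>The only use of simple connectivity: a loop in \<open>\<Omega>(g)\<close> cannot separate two points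
  of its complement.\<close>
lemma winding_number_ratio_escaping_loop:
  assumes "simply_connected (Omega_hat g)" "path \<gamma>" "pathfinish \<gamma> = pathstart \<gamma>"
    and "\<And>t. \<gamma> t \<in> escaping_set g" "za \<notin> escaping_set g" "zb \<notin> escaping_set g"
  shows "winding_number (\<lambda>t. (\<gamma> t - zb) / (\<gamma> t - za)) 0 = 0"
proof -
  have nonzero: "sphere_moebius za zb p \<noteq> 0" if p_in: "p \<in> Omega_hat g" for p
  proof (cases "p = north_pole")
    case False
    then obtain z where "p = sphere_embed z" "z \<in> escaping_set g"
      using p_in by (auto simp: Omega_hat_def)
    moreover from this have "z \<noteq> za" "z \<noteq> zb"
      using assms(5,6) by auto
    ultimately show ?thesis
      by (simp add: sphere_moebius_embed)
  qed (simp add: sphere_moebius_north_pole)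
  have continuous: "continuous_on (Omega_hat g) (sphere_moebius za zb)"
    unfolding Omega_hat_def using assms(5) by (rule continuous_on_sphere_moebius)
  have "path (sphere_embed \<circ> \<gamma>)"
    using assms(2) unfolding path_def by (intro continuous_on_compose continuous_on_sphere_embed)
  moreover have "pathfinish (sphere_embed \<circ> \<gamma>) = pathstart (sphere_embed \<circ> \<gamma>)"
    using assms(3) by (simp add: pathfinish_compose pathstart_compose)
  moreover have "path_image (sphere_embed \<circ> \<gamma>) \<subseteq> Omega_hat g"
    using assms(4) by (auto simp: path_image_def Omega_hat_def)
  ultimately have "winding_number (sphere_moebius za zb \<circ> (sphere_embed \<circ> \<gamma>)) 0 = 0"
    by (rule winding_number_zero_simply_connected[OF assms(1) _ _ _ continuous nonzero])
  moreover have "sphere_moebius za zb \<circ> (sphere_embed \<circ> \<gamma>) = (\<lambda>t. (\<gamma> t - zb) / (\<gamma> t - za))"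
  proof
    fix t
    have "\<gamma> t \<noteq> za"
      using assms(4,5) by metis
    then show "(sphere_moebius za zb \<circ> (sphere_embed \<circ> \<gamma>)) t = (\<gamma> t - zb) / (\<gamma> t - za)"
      by (simp add: sphere_moebius_embed)
  qed
  ultimately show ?thesis
    by simp
qed

section \<open>Escaping points of perturbed monomials\<close>

lemma escaping_set_iff_step: "g z \<in> escaping_set g \<longleftrightarrow> z \<in> escaping_set g"
proof -
  have "(\<lambda>n. (g ^^ n) (g z)) = (\<lambda>n. (g ^^ Suc n) z)"
    by (simp add: funpow_Suc_right del: funpow.simps)
  then show ?thesis
    unfolding escaping_set_def using filterlim_sequentially_Suc[of "\<lambda>n. (g ^^ n) z"] by simp
qed

lemma escaping_setI_expanding:
  assumes "1 < l" and expanding: "\<And>w. P w \<Longrightarrow> P (g w) \<and> l * cmod w \<le> cmod (g w)"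
    and "P z" "z \<noteq> 0"
  shows "z \<in> escaping_set g"
proof -
  have orbit: "P ((g ^^ n) z) \<and> l ^ n * cmod z \<le> cmod ((g ^^ n) z)" for n
  proof (induction n)
    case (Suc n)
    then have "l * (l ^ n * cmod z) \<le> l * cmod ((g ^^ n) z)"
      using assms(1) by (intro mult_left_mono) auto
    then show ?case
      using expanding[of "(g ^^ n) z"] Suc by (simp add: mult.assoc)
  qed (use \<open>P z\<close> in simp)
  have "filterlim (\<lambda>n. norm (l ^ n)) at_top sequentially"
    using filterlim_realpow_sequentially_gt1[of l] assms(1)
    unfolding filterlim_at_infinity_conv_norm_at_top by simp
  then have "filterlim (\<lambda>n. l ^ n) at_top sequentially"
    using assms(1) by simp
  then have "filterlim (\<lambda>n. l ^ n * cmod z) at_top sequentially"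
    using \<open>z \<noteq> 0\<close> by (intro filterlim_at_top_mult_tendsto_pos[OF tendsto_const]) auto
  then have "filterlim (\<lambda>n. cmod ((g ^^ n) z)) at_top sequentially"
    by (rule filterlim_at_top_mono) (use orbit in auto)
  then show ?thesis
    unfolding escaping_set_def filterlim_at_infinity_conv_norm_at_top by simp
qed

lemma delta_condition_pos:
  assumes "delta_condition m \<delta> a" "2 \<le> m"
  shows "0 < \<delta>"
proof -
  have "cmod (a 1) < \<delta>"
    using assms unfolding delta_condition_def by auto
  then show ?thesis
    using norm_ge_zero[of "a 1"] by linarith
qed

lemma monic_poly_perturbation:
  assumes "delta_condition m \<delta> a" "1 \<le> m"
  shows "cmod (monic_poly m a z - (z ^ m + a 0)) \<le> \<delta> * real (m - 1) * max 1 (cmod z) ^ (m - 1)"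
proof -
  have "{..<m} = insert 0 {1..<m}"
    using assms(2) by auto
  then have "monic_poly m a z - (z ^ m + a 0) = (\<Sum>k\<in>{1..<m}. a k * z ^ k)"
    unfolding monic_poly_def by simp
  also have "cmod \<dots> \<le> (\<Sum>k\<in>{1..<m}. cmod (a k) * cmod z ^ k)"
    by (rule order.trans[OF norm_sum]) (simp add: norm_mult norm_power)
  also have "\<dots> \<le> (\<Sum>k\<in>{1..<m}. \<delta> * max 1 (cmod z) ^ (m - 1))"
  proof (rule sum_mono)
    fix k assume k: "k \<in> {1..<m}"
    then have "cmod (a k) < \<delta>"
      using assms(1) unfolding delta_condition_def by auto
    moreover have "0 \<le> \<delta>"
      using \<open>cmod (a k) < \<delta>\<close> norm_ge_zero[of "a k"] by linarith
    moreover have "cmod z ^ k \<le> max 1 (cmod z) ^ (m - 1)"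
      using k order.trans[OF power_mono power_increasing, of "cmod z" "max 1 (cmod z)" k "m - 1"]
      by auto
    ultimately show "cmod (a k) * cmod z ^ k \<le> \<delta> * max 1 (cmod z) ^ (m - 1)"
      by (intro mult_mono) auto
  qed
  also have "\<dots> = \<delta> * real (m - 1) * max 1 (cmod z) ^ (m - 1)"
    by simp
  finally show ?thesis .
qed

lemma monic_poly_lower_bound:
  assumes "delta_condition m \<delta> a" "2 \<le> m" "1 \<le> cmod w"
  shows "cmod w ^ m * (1 - \<delta> * real (m - 1)) - cmod (a 0) \<le> cmod (monic_poly m a w)"
proof -
  have "0 \<le> \<delta> * real (m - 1)"
    using delta_condition_pos[OF assms(1,2)] by simp
  moreover have "cmod w ^ (m - 1) \<le> cmod w ^ m"
    using assms(3) by (intro power_increasing) auto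
  ultimately have "\<delta> * real (m - 1) * cmod w ^ (m - 1) \<le> \<delta> * real (m - 1) * cmod w ^ m"
    by (simp add: mult_left_mono)
  moreover have "cmod (monic_poly m a w - (w ^ m + a 0)) \<le> \<delta> * real (m - 1) * cmod w ^ (m - 1)"
    using monic_poly_perturbation[OF assms(1), of w] assms(2,3) by (simp add: max_def)
  moreover have "cmod (w ^ m) \<le> cmod (monic_poly m a w) + cmod (monic_poly m a w - (w ^ m + a 0)) + cmod (a 0)"
    using norm_triangle_ineq4[of "w ^ m + a 0" "a 0"]
      norm_triangle_ineq4[of "monic_poly m a w" "monic_poly m a w - (w ^ m + a 0)"] by simp
  ultimately show ?thesis
    by (simp add: norm_power algebra_simps)
qed

lemma coeff_prod_mset_linear:
  fixes A :: "'a::comm_ring_1 multiset"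
  shows "coeff (\<Prod>x\<in>#A. [:-x, 1:]) (size A) = 1"
    and "A \<noteq> {#} \<Longrightarrow> coeff (\<Prod>x\<in>#A. [:-x, 1:]) (size A - 1) = - sum_mset A"
    and "size A < k \<Longrightarrow> coeff (\<Prod>x\<in>#A. [:-x, 1:]) k = 0"
proof (induction A arbitrary: k)
  case empty
  { case 1 show ?case by simp }
  { case 2 then show ?case by simp }
  { case 3 then show ?case by (simp add: coeff_1) }
next
  case (add x A)
  let ?P = "\<Prod>x\<in>#A. [:-x, 1:]"
  have prod: "(\<Prod>y\<in>#add_mset x A. [:-y, 1:]) = smult (-x) ?P + pCons 0 ?P"
    by simp
  { case 1 show ?case
      unfolding prod using add.IH(1) add.IH(3)[of "Suc (size A)"] by simp }
  { case 2 show ?case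
    proof (cases "A = {#}")
      case False
      then obtain n where "size A = Suc n"
        by (cases "size A") auto
      then show ?thesis
        unfolding prod using add.IH(1) add.IH(2)[OF False] by simp
    qed simp }
  { case 3
    then obtain j where "k = Suc j" "size A < j"
      by (cases k) auto
    then show ?case
      unfolding prod using add.IH(3) by simp }
qed

lemma monic_poly_preimages:
  assumes "2 \<le> m"
  obtains R where "size R = m" "sum_mset R = - a (m - 1)" "\<And>x. x \<in># R \<Longrightarrow> monic_poly m a x = z0"
proof -
  define p where "p = monom 1 m + (\<Sum>k<m. monom (a k) k) - [:z0:]"
  have poly_p: "poly p z = monic_poly m a z - z0" for z
    unfolding p_def monic_poly_def by (simp add: poly_sum poly_monom)
  have coeff_p: "coeff p k = (if k = m then 1 else 0) + (if k < m then a k else 0) - (if k = 0 then z0 else 0)" for k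
    unfolding p_def by (simp add: coeff_sum coeff_monom coeff_pCons split: nat.split)
  have "degree p = m"
    using coeff_p[of m] assms by (intro antisym degree_le le_degree) (auto simp: coeff_p)
  then have "lead_coeff p = 1" "p \<noteq> 0"
    using coeff_p[of m] assms by auto
  then obtain R where "size R = m" and p_R: "p = (\<Prod>x\<in>#R. [:-x, 1:])"
    using alg_closed_imp_factorization[of p] \<open>degree p = m\<close> by auto
  show ?thesis
  proof
    show "size R = m" by fact
    have "a (m - 1) = coeff (\<Prod>x\<in>#R. [:-x, 1:]) (size R - 1)"
      using coeff_p[of "m - 1"] assms \<open>size R = m\<close> by (simp add: p_R[symmetric])
    also have "\<dots> = - sum_mset R"
      using \<open>size R = m\<close> assms by (intro coeff_prod_mset_linear(2)) auto
    finally show "sum_mset R = - a (m - 1)"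
      by simp
  next
    fix x assume "x \<in># R"
    then have "[:-x, 1:] dvd p"
      unfolding p_R by (intro dvd_prod_mset) auto
    then have "poly p x = 0"
      by (simp add: poly_eq_0_iff_dvd)
    then show "monic_poly m a x = z0"
      using poly_p[of x] by simp
  qed
qed

lemma Re_sum_mset_divide_ge:
  assumes "\<And>x. x \<in># R \<Longrightarrow> c \<le> Re (x / \<beta>)"
  shows "c * size R \<le> Re (sum_mset R / \<beta>)"
  using assms
proof (induction R)
  case (add x R)
  then have "c \<le> Re (x / \<beta>)" "c * size R \<le> Re (sum_mset R / \<beta>)"
    by auto
  then show ?case
    by (simp add: add_divide_distrib algebra_simps)
qed simp

lemma two_less_power_root_plus:
  assumes "0 < n" "0 < \<epsilon>"
  shows "2 < (2 powr (1 / real n) + \<epsilon>) ^ n"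
proof -
  have "(2 powr (1 / real n)) ^ n = (2::real)"
    using assms by (simp add: powr_power)
  moreover have "(2 powr (1 / real n)) ^ n < (2 powr (1 / real n) + \<epsilon>) ^ n"
    using assms by (intro power_strict_mono) auto
  ultimately show ?thesis
    by simp
qed

lemma escape_constants:
  assumes "2 < A" "1 \<le> m"
  obtains \<kappa> \<eta> :: real
  where "0 < \<kappa>" "\<kappa> < 1" "0 < \<eta>" "\<eta> \<le> \<kappa>\<^sup>2 / 8" "2 \<le> (1 - \<kappa>) ^ m * A * (1 - \<eta>)"
proof
  define \<kappa> where "\<kappa> = (A - 2) / ((A + 2) * real m)"
  define \<eta> where "\<eta> = min ((A - 2) / (2 * A)) (\<kappa>\<^sup>2 / 8)"
  show "0 < \<kappa>"
    unfolding \<kappa>_def using assms by simp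
  have "A - 2 < (A + 2) * 1"
    by simp
  also have "\<dots> \<le> (A + 2) * real m"
    using assms by (intro mult_left_mono) auto
  finally show "\<kappa> < 1"
    unfolding \<kappa>_def using assms by (simp add: divide_less_eq)
  show "0 < \<eta>" "\<eta> \<le> \<kappa>\<^sup>2 / 8"
    unfolding \<eta>_def using assms \<open>0 < \<kappa>\<close> by auto
  have "1 + real m * (- \<kappa>) \<le> (1 + (- \<kappa>)) ^ m"
    using \<open>\<kappa> < 1\<close> by (intro Bernoulli_inequality) simp
  moreover have "real m * \<kappa> = (A - 2) / (A + 2)"
    unfolding \<kappa>_def using assms by simp
  moreover have "1 - (A - 2) / (A + 2) = 4 / (A + 2)"
    using assms by (simp add: field_simps)
  ultimately have bernoulli: "4 / (A + 2) \<le> (1 - \<kappa>) ^ m"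
    by simp
  have "\<eta> \<le> (A - 2) / (2 * A)"
    unfolding \<eta>_def by simp
  moreover have "1 - (A - 2) / (2 * A) = (A + 2) / (2 * A)"
    using assms by (simp add: field_simps)
  ultimately have "(A + 2) / (2 * A) \<le> 1 - \<eta>"
    by linarith
  have "A \<noteq> 0" "A + 2 \<noteq> 0"
    using assms by auto
  then have "2 = 4 / (A + 2) * A * ((A + 2) / (2 * A))"
    by (simp add: divide_simps mult_ac)
  also have "\<dots> \<le> (1 - \<kappa>) ^ m * A * (1 - \<eta>)"
    using bernoulli \<open>(A + 2) / (2 * A) \<le> 1 - \<eta>\<close> assms \<open>\<kappa> < 1\<close>
    by (intro mult_mono mult_right_mono) auto
  finally show "2 \<le> (1 - \<kappa>) ^ m * A * (1 - \<eta>)" .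
qed

text \<open>\<open>T\<close> is the radius beyond which we show escape, \<open>\<kappa>\<close> measures how far inside the
  circle \<open>|z\<^sup>m + a 0| = |a 0|\<close> the non-escaping points lie, and \<open>\<delta>\<close> makes the terms
  \<open>a\<^sub>k z\<^sup>k\<close>, \<open>0 < k < m\<close>, negligible at both scales.\<close>
locale small_perturbation =
  fixes m :: nat and a :: "nat \<Rightarrow> complex" and \<delta> T \<kappa> :: real
  assumes two_le_m: "2 \<le> m"
    and delta_condition: "delta_condition m \<delta> a"
    and one_le_T: "1 \<le> T"
    and \<kappa>_pos: "0 < \<kappa>" and \<kappa>_less_1: "\<kappa> < 1"
    and perturbation_small: "\<delta> * real (m - 1) \<le> \<kappa>\<^sup>2 / 8"
    and T_large: "2 \<le> (1 - \<kappa>) ^ m * T ^ (m - 1) * (1 - \<delta> * real (m - 1))"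
begin

abbreviation "f \<equiv> monic_poly m a"
abbreviation "E \<equiv> escaping_set f"
abbreviation "\<eta> \<equiv> \<delta> * real (m - 1)"
abbreviation "r \<equiv> cmod (a 0)"

lemma \<eta>_bounds: "0 \<le> \<eta>" "\<eta> \<le> \<kappa> / 8" "\<eta> \<le> 1/2"
proof -
  show "0 \<le> \<eta>"
    using delta_condition_pos[OF delta_condition two_le_m] by simp
  have "\<kappa>\<^sup>2 \<le> \<kappa>"
    unfolding power2_eq_square by (rule mult_right_le_one_le) (use \<kappa>_pos \<kappa>_less_1 in auto)
  then show "\<eta> \<le> \<kappa> / 8" "\<eta> \<le> 1/2"
    using perturbation_small \<kappa>_less_1 by linarith+
qed

lemma lower_bound: "1 \<le> cmod w \<Longrightarrow> cmod w ^ m * (1 - \<eta>) - r \<le> cmod (f w)"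
  by (rule monic_poly_lower_bound[OF delta_condition two_le_m])

lemma T_power_large: "2 < T ^ (m - 1) * (1 - \<eta>)"
proof -
  define c where "c = (1 - \<kappa>) ^ m"
  have "(1 - \<kappa>) ^ m \<le> (1 - \<kappa>) ^ 1"
    using two_le_m \<kappa>_pos \<kappa>_less_1 by (intro power_decreasing) auto
  then have "c < 1"
    unfolding c_def using \<kappa>_pos by simp
  have "0 < c"
    unfolding c_def using \<kappa>_less_1 by simp
  have "2 \<le> c * (T ^ (m - 1) * (1 - \<eta>))"
    using T_large by (simp add: c_def mult.assoc)
  then have "0 < c * (T ^ (m - 1) * (1 - \<eta>))"
    by linarith
  then have "0 < T ^ (m - 1) * (1 - \<eta>)"
    using \<open>0 < c\<close> zero_less_mult_pos by blast
  then have "c * (T ^ (m - 1) * (1 - \<eta>)) < T ^ (m - 1) * (1 - \<eta>)"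
    using \<open>c < 1\<close> mult_strict_right_mono[of c 1] by fastforce
  then show ?thesis
    using \<open>2 \<le> c * (T ^ (m - 1) * (1 - \<eta>))\<close> by linarith
qed

lemma escaping_if_large:
  assumes "T \<le> cmod z" "r \<le> cmod z"
  shows "z \<in> E"
proof (rule escaping_setI_expanding)
  define l where "l = T ^ (m - 1) * (1 - \<eta>) - 1"
  show "1 < l"
    unfolding l_def using T_power_large by simp
  show "(T \<le> cmod (f w) \<and> r \<le> cmod (f w)) \<and> l * cmod w \<le> cmod (f w)"
    if "T \<le> cmod w \<and> r \<le> cmod w" for w
  proof -
    have "T ^ (m - 1) * (1 - \<eta>) \<le> cmod w ^ (m - 1) * (1 - \<eta>)"
      using that one_le_T \<eta>_bounds by (intro mult_right_mono power_mono) auto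
    then have "cmod w * (T ^ (m - 1) * (1 - \<eta>)) \<le> cmod w ^ m * (1 - \<eta>)"
      using two_le_m by (cases m) (simp_all add: mult.assoc mult_left_mono)
    then have "l * cmod w \<le> cmod (f w)"
      using lower_bound[of w] that one_le_T by (simp add: l_def algebra_simps)
    moreover have "cmod w \<le> l * cmod w"
      using \<open>1 < l\<close> mult_right_mono[of 1 l "cmod w"] by simp
    ultimately show ?thesis
      using that by linarith
  qed
qed (use assms one_le_T in auto)

lemma one_le_shrunk_T: "1 \<le> (1 - \<kappa>) * T"
proof (rule ccontr)
  assume "\<not> 1 \<le> (1 - \<kappa>) * T"
  then have "((1 - \<kappa>) * T) ^ (m - 1) \<le> 1"
    using \<kappa>_less_1 one_le_T by (intro power_le_one) auto
  have "(1 - \<kappa>) ^ m * (1 - \<eta>) \<le> (1 - \<kappa>) ^ m"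
    using \<eta>_bounds \<kappa>_less_1 by (simp add: mult_left_le)
  also have "\<dots> \<le> (1 - \<kappa>) ^ (m - 1)"
    using \<kappa>_pos \<kappa>_less_1 by (intro power_decreasing) auto
  finally have "(1 - \<kappa>) ^ m * (1 - \<eta>) * T ^ (m - 1) \<le> (1 - \<kappa>) ^ (m - 1) * T ^ (m - 1)"
    using one_le_T by (intro mult_right_mono) auto
  then have "2 \<le> ((1 - \<kappa>) * T) ^ (m - 1)"
    using T_large by (simp add: power_mult_distrib mult_ac)
  then show False
    using \<open>((1 - \<kappa>) * T) ^ (m - 1) \<le> 1\<close> by linarith
qed

lemma non_escaping_image_small:
  assumes "T \<le> r" "z \<notin> E"
  shows "cmod (f z) < (1 - \<kappa>) * r"
proof (rule ccontr)
  assume "\<not> cmod (f z) < (1 - \<kappa>) * r"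
  then have fz: "(1 - \<kappa>) * r \<le> cmod (f z)"
    by simp
  have "(1 - \<kappa>) * T \<le> (1 - \<kappa>) * r"
    using assms(1) \<kappa>_less_1 by (intro mult_left_mono) auto
  then have "1 \<le> (1 - \<kappa>) * r"
    using one_le_shrunk_T by linarith
  then have "1 \<le> cmod (f z)"
    using fz by linarith
  have "2 * r \<le> (1 - \<kappa>) ^ m * T ^ (m - 1) * (1 - \<eta>) * r"
    using T_large by (simp add: mult_right_mono)
  also have "\<dots> \<le> (1 - \<kappa>) ^ m * r ^ (m - 1) * (1 - \<eta>) * r"
    using assms(1) one_le_T \<eta>_bounds \<kappa>_less_1
    by (intro mult_right_mono mult_left_mono power_mono) auto
  also have "\<dots> = ((1 - \<kappa>) * r) ^ m * (1 - \<eta>)"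
    using two_le_m by (cases m) (simp_all add: power_mult_distrib)
  also have "\<dots> \<le> cmod (f z) ^ m * (1 - \<eta>)"
    using fz \<eta>_bounds \<open>1 \<le> (1 - \<kappa>) * r\<close> by (intro mult_right_mono power_mono) auto
  finally have "r \<le> cmod (f (f z))"
    using lower_bound[OF \<open>1 \<le> cmod (f z)\<close>] by linarith
  then have "f (f z) \<in> E"
    using assms(1) by (intro escaping_if_large) auto
  then show False
    using assms(2) by (simp add: escaping_set_iff_step)
qed

lemma non_escaping_near_circle:
  assumes "T \<le> r" "z \<notin> E"
  shows "cmod (z ^ m + a 0) < (1 - \<kappa>/2) * r"
proof -
  have fz: "cmod (f z) < (1 - \<kappa>) * r"
    by (rule non_escaping_image_small[OF assms])
  have "0 \<le> \<kappa> * r"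
    using \<kappa>_pos by simp
  have "max 1 (cmod z) ^ (m - 1) \<le> 4 * r"
  proof (cases "cmod z \<le> 1")
    case True
    then show ?thesis
      using assms(1) one_le_T by simp
  next
    case False
    then have "cmod z ^ m * (1 - \<eta>) < 2 * r"
      using lower_bound[of z] fz \<open>0 \<le> \<kappa> * r\<close> by (simp add: algebra_simps)
    moreover have "cmod z ^ m * (1/2) \<le> cmod z ^ m * (1 - \<eta>)"
      using \<eta>_bounds by (intro mult_left_mono) auto
    ultimately have "cmod z ^ m < 4 * r"
      by linarith
    moreover have "cmod z ^ (m - 1) \<le> cmod z ^ m"
      using False by (intro power_increasing) auto
    moreover have "max 1 (cmod z) = cmod z"
      using False by simp
    ultimately show ?thesis
      by linarith
  qed
  have "cmod (f z - (z ^ m + a 0)) \<le> \<eta> * max 1 (cmod z) ^ (m - 1)"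
    using monic_poly_perturbation[OF delta_condition, of z] two_le_m by simp
  also have "\<dots> \<le> \<kappa>/8 * (4 * r)"
    using \<eta>_bounds \<kappa>_pos \<open>max 1 (cmod z) ^ (m - 1) \<le> 4 * r\<close> by (intro mult_mono) auto
  finally show ?thesis
    using fz norm_triangle_ineq4[of "f z" "f z - (z ^ m + a 0)"] by (simp add: algebra_simps)
qed

end

locale non_escaping_point = small_perturbation +
  fixes z0 :: complex
  assumes T_le_z0: "T \<le> cmod z0"
    and z0_non_escaping: "z0 \<notin> escaping_set (monic_poly m a)"
begin

lemma T_less_r: "T < r"
proof -
  have "cmod z0 < r"
    using escaping_if_large[OF T_le_z0] z0_non_escaping by force
  then show ?thesis
    using T_le_z0 by linarith
qed

lemma r_pos: "0 < r"
  using T_less_r one_le_T by linarith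

text \<open>Dividing by \<open>rot\<close> moves the centre \<open>-a 0\<close> of the circle \<open>|z\<^sup>m + a 0| = r\<close>
  to the positive real axis.\<close>
definition rot :: complex where
  "rot = - a 0 / complex_of_real r"

lemma norm_rot: "cmod rot = 1"
  using r_pos by (simp add: rot_def norm_divide)

lemma rot_mult_r: "rot * complex_of_real r = - a 0"
  using r_pos by (simp add: rot_def)

lemma non_escaping_in_disc:
  assumes "x \<notin> E"
  shows "cmod (x ^ m / rot - of_real r) < (1 - \<kappa>/2) * r"
proof -
  have "rot \<noteq> 0"
    using norm_rot by auto
  then have "x ^ m + a 0 = rot * (x ^ m / rot - of_real r)"
    by (simp add: right_diff_distrib rot_mult_r)
  then have "cmod (x ^ m / rot - of_real r) = cmod (x ^ m + a 0)"
    by (simp only: norm_mult norm_rot mult_1)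
  then show ?thesis
    using non_escaping_near_circle[OF _ assms] T_less_r by simp
qed

lemma non_escaping_nonzero:
  assumes "x \<notin> E"
  shows "x \<noteq> 0"
proof
  assume "x = 0"
  then have "cmod (x ^ m + a 0) = r"
    using two_le_m by (simp add: power_0_left)
  moreover have "0 < \<kappa>/2 * r"
    using \<kappa>_pos r_pos by simp
  ultimately show False
    using non_escaping_near_circle[OF _ assms] T_less_r by (simp add: algebra_simps)
qed

text \<open>If all preimages of \<open>z0\<close> lay on one branch of \<open>(rot v)\<^sup>1\<^sup>/\<^sup>m\<close>, they would lie in a
  half-plane \<open>Re (x / \<beta>) \<ge> \<kappa>\<^sup>2/8\<close>, so their sum \<open>-a (m - 1)\<close> could not be small.\<close>
lemma off_branch_preimage:
  assumes "\<beta> ^ m = rot" "R \<noteq> {#}" "\<And>x. x \<in># R \<Longrightarrow> x \<notin> E" "sum_mset R = - a (m - 1)"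
  shows "\<exists>zb\<in>#R. zb \<noteq> \<beta> * principal_root m ((zb / \<beta>) ^ m)"
proof (rule ccontr)
  assume on_branch: "\<not> ?thesis"
  have "cmod \<beta> ^ m = 1 ^ m"
    using assms(1) norm_rot by (simp flip: norm_power)
  then have "cmod \<beta> = 1"
    by (rule power_eq_imp_eq_base) (use two_le_m in auto)
  then have "\<beta> \<noteq> 0"
    by auto
  have Re_ge: "\<kappa>\<^sup>2 / 8 \<le> Re (x / \<beta>)" if "x \<in># R" for x
  proof -
    have "x = \<beta> * principal_root m ((x / \<beta>) ^ m)"
      using on_branch that by blast
    then have "x / \<beta> = principal_root m ((x / \<beta>) ^ m)"
      using \<open>\<beta> \<noteq> 0\<close> by (metis nonzero_mult_div_cancel_left)
    moreover have "(x / \<beta>) ^ m = x ^ m / rot"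
      using assms(1) by (simp add: power_divide)
    ultimately show ?thesis
      using non_escaping_in_disc[OF assms(3)[OF that]] T_less_r one_le_T \<kappa>_pos \<kappa>_less_1 two_le_m
      by (simp only:) (intro Re_principal_root_disc, auto)
  qed
  have "1 \<le> real (size R)"
    using assms(2) by (simp add: Suc_le_eq nonempty_has_size)
  then have "\<kappa>\<^sup>2 / 8 \<le> \<kappa>\<^sup>2 / 8 * size R"
    using mult_left_mono[of 1 "real (size R)" "\<kappa>\<^sup>2 / 8"] by simp
  also have "\<dots> \<le> Re (sum_mset R / \<beta>)"
    by (rule Re_sum_mset_divide_ge) (rule Re_ge)
  also have "\<dots> \<le> cmod (sum_mset R / \<beta>)"
    by (rule complex_Re_le_cmod)
  also have "\<dots> = cmod (a (m - 1))"
    using assms(4) \<open>cmod \<beta> = 1\<close> by (simp add: norm_divide)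
  also have "\<dots> < \<delta>"
    using delta_condition two_le_m unfolding delta_condition_def by auto
  also have "\<dots> \<le> \<eta>"
    using delta_condition_pos[OF delta_condition two_le_m] two_le_m by simp
  finally show False
    using perturbation_small by linarith
qed

lemma branch_pair:
  obtains \<beta> za zb where "\<beta> ^ m = rot" "za \<notin> E" "zb \<notin> E"
    "za = \<beta> * principal_root m ((za / \<beta>) ^ m)"
    "zb \<notin> (\<lambda>v. \<beta> * principal_root m v) ` {v. 0 < Re v}"
proof -
  obtain R where R: "size R = m" "sum_mset R = - a (m - 1)" "\<And>x. x \<in># R \<Longrightarrow> f x = z0"
    using monic_poly_preimages[OF two_le_m] by blast
  have R_non_escaping: "x \<notin> E" if "x \<in># R" for x
    using z0_non_escaping R(3)[OF that] escaping_set_iff_step[of f x] by auto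
  have "R \<noteq> {#}"
    using R(1) two_le_m by auto
  then obtain za where "za \<in># R"
    by blast
  have "za \<noteq> 0" "rot \<noteq> 0"
    using non_escaping_nonzero R_non_escaping \<open>za \<in># R\<close> norm_rot by auto
  obtain \<beta> where "\<beta> ^ m = rot" and za_branch: "za = \<beta> * principal_root m ((za / \<beta>) ^ m)"
    by (rule principal_root_branch_through[of m za rot]) (use two_le_m \<open>za \<noteq> 0\<close> \<open>rot \<noteq> 0\<close> in auto)
  obtain zb where "zb \<in># R" and zb_off: "zb \<noteq> \<beta> * principal_root m ((zb / \<beta>) ^ m)"
    using off_branch_preimage[OF \<open>\<beta> ^ m = rot\<close> \<open>R \<noteq> {#}\<close> R_non_escaping R(2)] by blast
  have "\<beta> \<noteq> 0"
    using \<open>\<beta> ^ m = rot\<close> \<open>rot \<noteq> 0\<close> two_le_m by (auto simp: power_0_left)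
  have "zb \<notin> (\<lambda>v. \<beta> * principal_root m v) ` {v. 0 < Re v}"
  proof
    assume "zb \<in> (\<lambda>v. \<beta> * principal_root m v) ` {v. 0 < Re v}"
    then obtain v where "0 < Re v" and zb: "zb = \<beta> * principal_root m v"
      by blast
    then have "(zb / \<beta>) ^ m = v"
      using \<open>\<beta> \<noteq> 0\<close> two_le_m by (auto intro: principal_root_power)
    then show False
      using zb_off zb by simp
  qed
  with \<open>\<beta> ^ m = rot\<close> R_non_escaping \<open>za \<in># R\<close> \<open>zb \<in># R\<close> za_branch show ?thesis
    by (intro that) auto
qed

lemma circle_escapes:
  assumes "\<beta> ^ m = rot"
  shows "\<beta> * principal_root m (circlepath (of_real r) ((1 - \<kappa>/4) * r) t) \<in> E"
proof -
  define s where "s = (1 - \<kappa>/4) * r"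
  define v where "v = circlepath (of_real r) s t"
  have "0 < s" "s < r"
    unfolding s_def using \<kappa>_pos \<kappa>_less_1 r_pos by (simp_all add: algebra_simps)
  then have "cmod (v - of_real r) = s"
    unfolding v_def by (simp add: circlepath norm_mult)
  then have "v \<noteq> 0"
    using \<open>s < r\<close> by auto
  have "(\<beta> * principal_root m v) ^ m = rot * v"
    using assms principal_root_power[OF _ \<open>v \<noteq> 0\<close>, of m] two_le_m by (simp add: power_mult_distrib)
  then have "(\<beta> * principal_root m v) ^ m + a 0 = rot * (v - of_real r)"
    by (simp add: right_diff_distrib rot_mult_r)
  then have "cmod ((\<beta> * principal_root m v) ^ m + a 0) = s"
    using norm_rot \<open>cmod (v - of_real r) = s\<close> by (simp add: norm_mult)
  moreover have "(1 - \<kappa>/2) * r \<le> s"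
    unfolding s_def using \<kappa>_pos r_pos by (intro mult_right_mono) auto
  ultimately have "\<not> cmod ((\<beta> * principal_root m v) ^ m + a 0) < (1 - \<kappa>/2) * r"
    by simp
  then show ?thesis
    using non_escaping_near_circle[OF less_imp_le[OF T_less_r], of "\<beta> * principal_root m v"]
    unfolding v_def s_def by blast
qed

text \<open>The loop is the lift, through the branch of \<open>(rot v)\<^sup>1\<^sup>/\<^sup>m\<close> containing \<open>za\<close>, of a circle
  about \<open>r\<close> lying between the disc of \<open>non_escaping_in_disc\<close> and the origin.\<close>
lemma escaping_root_loop:
  assumes "\<beta> ^ m = rot" "za \<notin> E" "za = \<beta> * principal_root m ((za / \<beta>) ^ m)"
    and "zb \<notin> (\<lambda>v. \<beta> * principal_root m v) ` {v. 0 < Re v}"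
  obtains \<gamma> where "valid_path \<gamma>" "pathfinish \<gamma> = pathstart \<gamma>" "\<And>t. \<gamma> t \<in> E"
    "winding_number \<gamma> za = 1" "winding_number \<gamma> zb = 0"
proof
  define s where "s = (1 - \<kappa>/4) * r"
  define va where "va = (za / \<beta>) ^ m"
  define \<gamma> where "\<gamma> = (\<lambda>v. \<beta> * principal_root m v) \<circ> circlepath (of_real r) s"
  have "0 < s" "s < r"
    unfolding s_def using \<kappa>_pos \<kappa>_less_1 r_pos by (simp_all add: algebra_simps)
  have "0 < \<kappa> * r"
    using \<kappa>_pos r_pos by simp
  then have "cmod (va - of_real r) < s"
    using non_escaping_in_disc[OF assms(2)] assms(1) by (simp add: va_def s_def power_divide algebra_simps)
  have right_halfplane: "0 < Re v" if "cmod (v - of_real r) \<le> s" for v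
    using abs_Re_le_cmod[of "v - of_real r"] that \<open>s < r\<close> by simp
  have circle: "path_image (circlepath (of_real r) s) \<subseteq> {v. 0 < Re v} - {va}"
  proof
    fix v
    assume "v \<in> path_image (circlepath (of_real r) s)"
    then have "cmod (v - of_real r) = s"
      using \<open>0 < s\<close> by (simp add: dist_norm norm_minus_commute)
    then show "v \<in> {v. 0 < Re v} - {va}"
      using right_halfplane[of v] \<open>cmod (va - of_real r) < s\<close> by auto
  qed
  have "\<beta> \<noteq> 0"
    using assms(1) norm_rot two_le_m by (auto simp: power_0_left)
  show "valid_path \<gamma>"
    unfolding \<gamma>_def using circle right_halfplane_nonpos_Reals
    by (intro valid_path_compose_holomorphic[OF valid_path_circlepath _ open_halfspace_Re_gt]
        holomorphic_intros holomorphic_on_subset[OF holomorphic_on_principal_root]) auto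
  show "pathfinish \<gamma> = pathstart \<gamma>"
    by (simp add: \<gamma>_def pathfinish_compose pathstart_compose)
  show "\<gamma> t \<in> E" for t
    using circle_escapes[OF assms(1)] by (simp add: \<gamma>_def s_def)
  have "winding_number \<gamma> za = winding_number (circlepath (of_real r) s) va"
    unfolding \<gamma>_def va_def using circle right_halfplane[of va] \<open>cmod (va - of_real r) < s\<close>
    by (subst assms(3), intro winding_number_principal_root_branch)
      (use two_le_m \<open>\<beta> \<noteq> 0\<close> in \<open>auto simp: va_def\<close>)
  also have "\<dots> = 1"
    using \<open>cmod (va - of_real r) < s\<close> by (intro winding_number_circlepath) (simp add: norm_minus_commute)
  finally show "winding_number \<gamma> za = 1" .
  show "winding_number \<gamma> zb = 0"
    unfolding \<gamma>_def using circle assms(4)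
    by (intro winding_number_principal_root_branch_outside) auto
qed

theorem not_simply_connected: "\<not> simply_connected (Omega_hat f)"
proof
  assume simply_connected: "simply_connected (Omega_hat f)"
  obtain \<beta> za zb where \<beta>: "\<beta> ^ m = rot" and "za \<notin> E" "zb \<notin> E"
    and za_branch: "za = \<beta> * principal_root m ((za / \<beta>) ^ m)"
    and zb_off: "zb \<notin> (\<lambda>v. \<beta> * principal_root m v) ` {v. 0 < Re v}"
    by (rule branch_pair)
  obtain \<gamma> where "valid_path \<gamma>" "pathfinish \<gamma> = pathstart \<gamma>" and in_E: "\<And>t. \<gamma> t \<in> E"
    and "winding_number \<gamma> za = 1" "winding_number \<gamma> zb = 0"
    by (rule escaping_root_loop[OF \<beta> \<open>za \<notin> E\<close> za_branch zb_off]) blast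
  moreover have "za \<notin> path_image \<gamma>" "zb \<notin> path_image \<gamma>"
    using in_E \<open>za \<notin> E\<close> \<open>zb \<notin> E\<close> by (auto simp: path_image_def)
  ultimately have "winding_number (\<lambda>t. (\<gamma> t - zb) / (\<gamma> t - za)) 0 = -1"
    by (simp add: winding_number_ratio)
  moreover have "winding_number (\<lambda>t. (\<gamma> t - zb) / (\<gamma> t - za)) 0 = 0"
    using simply_connected \<open>valid_path \<gamma>\<close> \<open>pathfinish \<gamma> = pathstart \<gamma>\<close> in_E \<open>za \<notin> E\<close> \<open>zb \<notin> E\<close>
    by (intro winding_number_ratio_escaping_loop) (auto intro: valid_path_imp_path)
  ultimately show False
    by simp
qed
end

lemma (in small_perturbation) escaping_if_simply_connected:
  assumes "simply_connected (Omega_hat f)" "T \<le> cmod z"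
  shows "z \<in> E"
proof (rule ccontr)
  assume "z \<notin> E"
  interpret non_escaping_point m a \<delta> T \<kappa> z
    using assms(2) \<open>z \<notin> E\<close> by unfold_locales
  show False
    using not_simply_connected assms(1) by blast
qed

lemma small_perturbation_exists:
  assumes "2 \<le> m" "1 \<le> T" "2 < T ^ (m - 1)"
  obtains \<delta> \<kappa> where "0 < \<delta>" "\<And>a. delta_condition m \<delta> a \<Longrightarrow> small_perturbation m a \<delta> T \<kappa>"
proof -
  obtain \<kappa> \<eta> where "0 < \<kappa>" "\<kappa> < 1" "0 < \<eta>" "\<eta> \<le> \<kappa>\<^sup>2 / 8"
    and "2 \<le> (1 - \<kappa>) ^ m * T ^ (m - 1) * (1 - \<eta>)"
    using escape_constants[OF assms(3), of m] assms(1) by auto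
  define \<delta> where "\<delta> = \<eta> / real (m - 1)"
  have "\<delta> * real (m - 1) = \<eta>"
    using assms(1) by (simp add: \<delta>_def)
  then have small: "\<delta> * real (m - 1) \<le> \<kappa>\<^sup>2 / 8"
    and large: "2 \<le> (1 - \<kappa>) ^ m * T ^ (m - 1) * (1 - \<delta> * real (m - 1))"
    using \<open>\<eta> \<le> \<kappa>\<^sup>2 / 8\<close> \<open>2 \<le> (1 - \<kappa>) ^ m * T ^ (m - 1) * (1 - \<eta>)\<close> by simp_all
  show ?thesis
  proof (rule that)
    show "0 < \<delta>"
      using \<open>0 < \<eta>\<close> assms(1) by (simp add: \<delta>_def)
    show "small_perturbation m a \<delta> T \<kappa>" if "delta_condition m \<delta> a" for a
      using assms(1,2) that \<open>0 < \<kappa>\<close> \<open>\<kappa> < 1\<close> small large by unfold_locales blast+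
  qed
qed

theorem mainTheorem12:
  fixes m :: nat
  assumes "m \<ge> 3"
  shows "\<forall>\<epsilon>>0. \<exists>\<delta>>0. \<forall>a :: nat \<Rightarrow> complex.
           delta_condition m \<delta> a \<and> simply_connected (Omega_hat (monic_poly m a)) \<longrightarrow>
           {z. cmod z \<ge> 2 powr (1 / (real m - 1)) + \<epsilon>} \<subseteq> escaping_set (monic_poly m a)"
proof (intro allI impI)
  fix \<epsilon> :: real
  assume "\<epsilon> > 0"
  define T where "T = 2 powr (1 / (real m - 1)) + \<epsilon>"
  have "1 \<le> T"
    unfolding T_def using ge_one_powr_ge_zero[of 2 "1 / (real m - 1)"] assms \<open>\<epsilon> > 0\<close> by simp
  have "2 < T ^ (m - 1)"
    unfolding T_def using two_less_power_root_plus[of "m - 1" \<epsilon>] assms \<open>\<epsilon> > 0\<close> by (simp add: of_nat_diff)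
  obtain \<delta> \<kappa> where "0 < \<delta>"
    and perturbation: "\<And>a. delta_condition m \<delta> a \<Longrightarrow> small_perturbation m a \<delta> T \<kappa>"
    using small_perturbation_exists[OF _ \<open>1 \<le> T\<close> \<open>2 < T ^ (m - 1)\<close>] assms by auto
  show "\<exists>\<delta>>0. \<forall>a :: nat \<Rightarrow> complex.
          delta_condition m \<delta> a \<and> simply_connected (Omega_hat (monic_poly m a)) \<longrightarrow>
          {z. cmod z \<ge> 2 powr (1 / (real m - 1)) + \<epsilon>} \<subseteq> escaping_set (monic_poly m a)"
    using \<open>0 < \<delta>\<close> small_perturbation.escaping_if_simply_connected[OF perturbation]
    by (auto simp: T_def)
qed

end
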